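(* Let $V$ be of O'Connell–Yor type. Then $\psi_2^V(\theta)\le0$ for all $\theta>0$.
   Context: A function $V$ is of O'Connell–Yor type if $V\ge0$ is smooth and convex and there are constants $c,C,c_0>0$ such that $V(x)\ge c|x|^2$ for $x\le -C$, $V'(x)\le 0$ for all $x$, and $c_0V''(x)\le -V'''(x)\le c_0^{-1}V''(x)+C\,\mathbf{1}_{\{x\ge -C\}}$ for all $x$. With $Z(\theta)=\int_{\mathbb{R}}\mathrm{e}^{-\theta x-V(x)}\mathrm{d}x$, $\psi^V_2(\theta)=\frac{\mathrm{d}^{3}}{\mathrm{d}\theta^{3}}\log Z(\theta)$. *)

theory Defs
  imports "HOL-Analysis.Analysis"
begin

definition smooth_real :: "(real \<Rightarrow> real) \<Rightarrow> bool" where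
  "smooth_real f \<longleftrightarrow> (\<exists>D :: nat \<Rightarrow> real \<Rightarrow> real. D 0 = f \<and>
      (\<forall>n x. (D n has_real_derivative D (Suc n) x) (at x)))"

definition nderiv :: "nat \<Rightarrow> (real \<Rightarrow> real) \<Rightarrow> real \<Rightarrow> real" where
  "nderiv n f = (deriv ^^ n) f"

definition OConnell_Yor_type :: "(real \<Rightarrow> real) \<Rightarrow> bool" where
  "OConnell_Yor_type V \<longleftrightarrow>
     (\<forall>x. V x \<ge> 0) \<and> smooth_real V \<and> convex_on UNIV V \<and>
     (\<exists>c C c0 :: real. c > 0 \<and> C > 0 \<and> c0 > 0 \<and>
        (\<forall>x. x \<le> - C \<longrightarrow> V x \<ge> c * x\<^sup>2) \<and>
        (\<forall>x. nderiv 1 V x \<le> 0) \<and>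
        (\<forall>x. c0 * nderiv 2 V x \<le> - nderiv 3 V x \<and>
             - nderiv 3 V x \<le> nderiv 2 V x / c0 + C * (if x \<ge> - C then 1 else 0)))"

definition Zpart :: "(real \<Rightarrow> real) \<Rightarrow> real \<Rightarrow> real" where
  "Zpart V \<theta> = (\<integral>x. exp (- \<theta> * x - V x) \<partial>lborel)"

definition psi2 :: "(real \<Rightarrow> real) \<Rightarrow> real \<Rightarrow> real" where
  "psi2 V \<theta> = nderiv 3 (\<lambda>t. ln (Zpart V t)) \<theta>"

end

(* The map theta |-> ln Z(theta) is the cumulant generating function of the probability
   density proportional to f(x) = exp(-theta x - V x), so psi_2(theta) is minus the third
   central moment of f divided by Z, and it suffices to show that f is positively skewed.
   The score g = theta + V' of f (so that f' = -g f) is nondecreasing and concave, because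
   V'' >= 0 and V''' <= 0. Let m be the mean and P(y) the integral of (x - m) f(x) over
   (-inf, y]. Concavity of g makes tau = -P / f nondecreasing, and an integration by parts
   gives  int (x - m)^3 f = 2 int (x - m) (tau(x) - tau(m)) f(x) dx,  which is nonnegative
   since both factors of the integrand have the sign of x - m. *)

theory Submission
  imports Defs "HOL-Probability.Sinc_Integral"
begin

section \<open>Derivatives\<close>

lemma DERIV_nonneg_imp_le_lim_at_top:
  fixes F F' :: "real \<Rightarrow> real"
  assumes "\<And>t. t \<ge> y \<Longrightarrow> (F has_real_derivative F' t) (at t)"
    and "\<And>t. t \<ge> y \<Longrightarrow> F' t \<ge> 0"
    and "(F \<longlongrightarrow> L) at_top"
  shows "F y \<le> L"
proof (rule tendsto_lowerbound[OF assms(3)])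
  show "\<forall>\<^sub>F t in at_top. F y \<le> F t"
    using eventually_ge_at_top[of y]
    by eventually_elim (rule DERIV_nonneg_imp_nondecreasing, use assms in auto)
qed simp

lemma DERIV_nonneg_imp_lim_at_bot_le:
  fixes F F' :: "real \<Rightarrow> real"
  assumes "\<And>t. t \<le> y \<Longrightarrow> (F has_real_derivative F' t) (at t)"
    and "\<And>t. t \<le> y \<Longrightarrow> F' t \<ge> 0"
    and "(F \<longlongrightarrow> L) at_bot"
  shows "L \<le> F y"
proof (rule tendsto_upperbound[OF assms(3)])
  show "\<forall>\<^sub>F t in at_bot. F t \<le> F y"
    using eventually_le_at_bot[of y]
    by eventually_elim (rule DERIV_nonneg_imp_nondecreasing, use assms in auto)
qed simp

lemma antimono_deriv_imp_below_tangent: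
  fixes g g' :: "real \<Rightarrow> real"
  assumes deriv: "\<And>x. (g has_real_derivative g' x) (at x)"
    and antimono: "\<And>x y. x \<le> y \<Longrightarrow> g' y \<le> g' x"
  shows "g y \<le> g a + g' a * (y - a)"
proof -
  have "convex_on UNIV (\<lambda>x. - g x)"
    using deriv antimono by (intro convex_on_realI[where f' = "\<lambda>x. - g' x"]) (auto intro!: derivative_eq_intros)
  then have "- g y - - g a \<ge> - g' a * (y - a)"
    by (rule convex_on_imp_above_tangent) (auto intro!: derivative_eq_intros deriv)
  then show ?thesis
    by simp
qed

lemma convex_on_second_deriv_nonneg:
  fixes V V' V'' :: "real \<Rightarrow> real"
  assumes convex: "convex_on UNIV V"
    and V': "\<And>x. (V has_real_derivative V' x) (at x)"
    and V'': "\<And>x. (V' has_real_derivative V'' x) (at x)"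
  shows "V'' x \<ge> 0"
proof (rule mono_on_imp_deriv_nonneg[OF _ V''])
  show "mono_on UNIV V'"
  proof (rule mono_onI)
    fix a b :: real
    assume "a \<le> b"
    have "V b - V a \<ge> V' a * (b - a)" "V a - V b \<ge> V' b * (a - b)"
      by (rule convex_on_imp_above_tangent[OF convex]; use V' in \<open>auto simp: connected_UNIV\<close>)+
    then have "(b - a) * (V' a - V' b) \<le> 0"
      by (simp add: algebra_simps)
    then show "V' a \<le> V' b"
      using \<open>a \<le> b\<close> by (cases "a = b") (auto simp: mult_le_0_iff)
  qed
qed simp

lemma nderiv_eq_on_open:
  fixes D :: "nat \<Rightarrow> real \<Rightarrow> real"
  assumes "open S"
    and D0: "\<And>s. s \<in> S \<Longrightarrow> D 0 s = F s"
    and D: "\<And>n s. n < N \<Longrightarrow> s \<in> S \<Longrightarrow> (D n has_real_derivative D (Suc n) s) (at s)"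
  shows "n \<le> N \<Longrightarrow> s \<in> S \<Longrightarrow> nderiv n F s = D n s"
proof (induction n arbitrary: s)
  case 0
  then show ?case
    by (simp add: nderiv_def D0)
next
  case (Suc n)
  have "\<forall>\<^sub>F r in nhds s. nderiv n F r = D n r"
    using eventually_nhds_in_open[OF \<open>open S\<close> \<open>s \<in> S\<close>]
    by eventually_elim (use Suc in auto)
  then have "deriv (nderiv n F) s = deriv (D n) s"
    by (rule deriv_cong_ev) simp
  also have "\<dots> = D (Suc n) s"
    using Suc by (intro DERIV_imp_deriv D) auto
  finally show ?case
    by (simp add: nderiv_def)
qed

lemma moment_ratio_has_real_derivative:
  fixes M :: "nat \<Rightarrow> real \<Rightarrow> real"
  assumes "\<And>k. (M k has_real_derivative - M (Suc k) s) (at s)" and "M 0 s \<noteq> 0"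
  shows "((\<lambda>s. M k s / M 0 s) has_real_derivative
    - (M (Suc k) s / M 0 s) + (M k s / M 0 s) * (M 1 s / M 0 s)) (at s)"
proof -
  have "((\<lambda>s. M k s / M 0 s) has_real_derivative
      (- M (Suc k) s * M 0 s - M k s * - M (Suc 0) s) / (M 0 s * M 0 s)) (at s)"
    using assms by (intro DERIV_divide) auto
  then show ?thesis
    using assms(2) by (simp add: field_simps)
qed

lemma nderiv_3_ln_of_moments:
  fixes M :: "nat \<Rightarrow> real \<Rightarrow> real"
  assumes "open S" and "t \<in> S"
    and deriv: "\<And>k s. s \<in> S \<Longrightarrow> (M k has_real_derivative - M (Suc k) s) (at s)"
    and pos: "\<And>s. s \<in> S \<Longrightarrow> M 0 s > 0"
  shows "nderiv 3 (\<lambda>s. ln (M 0 s)) t =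
    - (M 3 t / M 0 t - 3 * (M 1 t / M 0 t) * (M 2 t / M 0 t) + 2 * (M 1 t / M 0 t) ^ 3)"
proof -
  define m where "m k s = M k s / M 0 s" for k s
  have m: "(m k has_real_derivative - m (Suc k) s + m k s * m 1 s) (at s)" if "s \<in> S" for k s
    unfolding m_def[abs_def] using pos[OF that]
    by (intro moment_ratio_has_real_derivative[where M = M] deriv[OF that]) simp
  define D where "D n = (case n of
      0 \<Rightarrow> (\<lambda>s. ln (M 0 s))
    | Suc 0 \<Rightarrow> (\<lambda>s. - m 1 s)
    | Suc (Suc 0) \<Rightarrow> (\<lambda>s. m 2 s - m 1 s ^ 2)
    | _ \<Rightarrow> (\<lambda>s. - (m 3 s - 3 * m 1 s * m 2 s + 2 * m 1 s ^ 3)))" for n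
  have D_deriv: "(D n has_real_derivative D (Suc n) s) (at s)" if n: "n < 3" and s: "s \<in> S" for n s
  proof -
    consider "n = 0" | "n = 1" | "n = 2"
      using n by linarith
    then show ?thesis
    proof cases
      case 1
      have "((\<lambda>s. ln (M 0 s)) has_real_derivative 1 / M 0 s * - M (Suc 0) s) (at s)"
        using pos[OF s] by (intro DERIV_chain2[OF DERIV_ln_divide deriv[OF s]])
      then show ?thesis
        using 1 by (simp add: D_def m_def)
    next
      case 2
      then show ?thesis
        using DERIV_minus[OF m[OF s, of 1]] by (simp add: D_def numeral_2_eq_2 power2_eq_square)
    next
      case 3
      then show ?thesis
        using s by (auto simp: D_def numeral_3_eq_3 numeral_2_eq_2 power2_eq_square power3_eq_cube
            algebra_simps intro!: derivative_eq_intros m)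
    qed
  qed
  have "nderiv 3 (\<lambda>s. ln (M 0 s)) t = D 3 t"
    by (rule nderiv_eq_on_open[of S D _ 3]) (use assms(1,2) D_deriv in \<open>auto simp: D_def\<close>)
  then show ?thesis
    by (simp add: D_def m_def numeral_3_eq_3)
qed

section \<open>Integrals over the real line\<close>

lemma integral_lborel_pos:
  fixes h :: "real \<Rightarrow> real"
  assumes "integrable lborel h" and "\<And>x. h x > 0"
  shows "integral\<^sup>L lborel h > 0"
proof -
  have nonneg: "integral\<^sup>L lborel h \<ge> 0"
    using assms(2) by (simp add: less_imp_le)
  have "\<not> (AE x in lborel. h x = 0)"
  proof
    assume "AE x in lborel. h x = 0"
    moreover have "h x \<noteq> 0" for x
      using assms(2)[of x] by simp
    ultimately have "AE x::real in lborel. False"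
      by simp
    then show False
      using ae_filter_eq_bot_iff[of lborel] trivial_limit_def by force
  qed
  then have "integral\<^sup>L lborel h \<noteq> 0"
    using integral_nonneg_eq_0_iff_AE[OF assms(1)] assms(2) by (simp add: less_imp_le)
  with nonneg show ?thesis
    by simp
qed

lemma integral_dominated_convergence_at:
  fixes s :: "real \<Rightarrow> 'a \<Rightarrow> 'b::{banach, second_countable_topology}" and w :: "'a \<Rightarrow> real"
  assumes "f \<in> borel_measurable M" "\<And>t. s t \<in> borel_measurable M" "integrable M w"
    and lim: "AE x in M. ((\<lambda>t. s t x) \<longlongrightarrow> f x) (at y)"
    and bound: "\<forall>\<^sub>F t in at y. AE x in M. norm (s t x) \<le> w x"
  shows "((\<lambda>t. integral\<^sup>L M (s t)) \<longlongrightarrow> integral\<^sup>L M f) (at y)"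
proof (subst tendsto_at_iff_sequentially, intro allI impI)
  fix X :: "nat \<Rightarrow> real"
  assume "\<forall>i. X i \<in> UNIV - {y}" and "X \<longlonglongrightarrow> y"
  then have X: "filterlim X (at y) sequentially"
    by (intro filterlim_atI) auto
  from filterlim_iff[THEN iffD1, OF X, rule_format, OF bound]
  obtain N where w: "\<And>n. N \<le> n \<Longrightarrow> AE x in M. norm (s (X n) x) \<le> w x"
    by (auto simp: eventually_sequentially)
  show "((\<lambda>t. integral\<^sup>L M (s t)) \<circ> X) \<longlonglongrightarrow> integral\<^sup>L M f"
    unfolding comp_def
  proof (rule LIMSEQ_offset, rule integral_dominated_convergence)
    show "AE x in M. norm (s (X (n + N)) x) \<le> w x" for n
      by (rule w) simp
    show "AE x in M. (\<lambda>n. s (X (n + N)) x) \<longlonglongrightarrow> f x"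
      using lim
    proof eventually_elim
      case (elim x)
      then show ?case
        by (intro LIMSEQ_ignore_initial_segment filterlim_compose[OF _ X])
    qed
  qed (use assms in auto)
qed

definition integral_upto :: "(real \<Rightarrow> real) \<Rightarrow> real \<Rightarrow> real" where
  "integral_upto h y = (\<integral>x. indicator {..y} x * h x \<partial>lborel)"

lemma integral_upto_tendsto_at_top:
  assumes "integrable lborel h"
  shows "(integral_upto h \<longlongrightarrow> integral\<^sup>L lborel h) at_top"
  using tendsto_integral_at_top[of lborel h] assms unfolding integral_upto_def[abs_def] by simp

lemma integral_upto_tendsto_at_bot:
  assumes int: "integrable lborel h"
  shows "(integral_upto h \<longlongrightarrow> 0) at_bot"
proof (rule tendsto_at_botI_sequentially)
  have [measurable]: "h \<in> borel_measurable borel"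
    using borel_measurable_integrable[OF int] by simp
  fix X :: "nat \<Rightarrow> real"
  assume X: "filterlim X at_bot sequentially"
  have "(\<lambda>n. \<integral>x. indicator {..X n} x * h x \<partial>lborel) \<longlonglongrightarrow> integral\<^sup>L lborel (\<lambda>x::real. 0)"
  proof (rule integral_dominated_convergence
      [of "\<lambda>x. 0" lborel "\<lambda>n x. indicator {..X n} x * h x" "\<lambda>x. norm (h x)"])
    show "AE x in lborel. (\<lambda>n. indicator {..X n} x * h x) \<longlonglongrightarrow> 0"
    proof (rule AE_I2)
      fix x
      have "\<forall>\<^sub>F n in sequentially. X n < x"
        using X by (simp add: filterlim_at_bot_dense)
      then have "\<forall>\<^sub>F n in sequentially. indicator {..X n} x * h x = 0"
        by eventually_elim (simp add: indicator_def)
      then show "(\<lambda>n. indicator {..X n} x * h x) \<longlonglongrightarrow> 0"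
        by (rule tendsto_eventually)
    qed
    show "AE x in lborel. norm (indicator {..X n} x * h x) \<le> norm (h x)" for n
      by (simp add: indicator_def)
  qed (use int in auto)
  then show "(\<lambda>n. integral_upto h (X n)) \<longlonglongrightarrow> 0"
    by (simp add: integral_upto_def)
qed

lemma integral_upto_diff:
  assumes "integrable lborel h" and "x \<le> z"
  shows "integral_upto h z - integral_upto h x = (LBINT t=x..z. h t)"
proof -
  have "integrable lborel (\<lambda>t. indicator {..b} t * h t)" for b
    using integrable_mult_indicator[of "{..b}" lborel h] assms(1) by simp
  then have "integral_upto h z - integral_upto h x =
      (\<integral>t. indicator {..z} t * h t - indicator {..x} t * h t \<partial>lborel)"
    unfolding integral_upto_def by (simp add: Bochner_Integration.integral_diff)
  also have "\<dots> = (\<integral>t. indicator {x<..z} t *\<^sub>R h t \<partial>lborel)"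
    using assms(2) by (intro Bochner_Integration.integral_cong) (auto simp: indicator_def)
  also have "\<dots> = (LBINT t=x..z. h t)"
    using assms(2) by (simp add: interval_integral_Ioc set_lebesgue_integral_def)
  finally show ?thesis .
qed

lemma integral_upto_has_real_derivative:
  assumes cont: "continuous_on UNIV h" and int: "integrable lborel h"
  shows "(integral_upto h has_real_derivative h y) (at y)"
proof -
  obtain G where G: "\<And>x. (G has_vector_derivative h x) (at x)"
    using einterval_antiderivative[of "-\<infinity>" "\<infinity>" h] cont
    by (auto simp: continuous_on_eq_continuous_at)
  have increment: "integral_upto h z - integral_upto h x = G z - G x" if "x \<le> z" for x z
    unfolding integral_upto_diff[OF int that]
  proof (rule interval_integral_FTC_finite)
    show "continuous_on {min x z..max x z} h"
      using cont by (rule continuous_on_subset) simp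
    show "(G has_vector_derivative h t) (at t within {min x z..max x z})" for t
      using G by (rule has_vector_derivative_at_within)
  qed
  have "integral_upto h = (\<lambda>z. G z + (integral_upto h 0 - G 0))"
  proof
    fix z
    show "integral_upto h z = G z + (integral_upto h 0 - G 0)"
      using increment[of 0 z] increment[of z 0] by (cases "0 \<le> z") auto
  qed
  moreover have "((\<lambda>z. G z + (integral_upto h 0 - G 0)) has_real_derivative h y) (at y)"
    using G has_real_derivative_iff_has_vector_derivative by (auto intro!: derivative_eq_intros)
  ultimately show ?thesis
    by simp
qed

section \<open>Exponentially decaying functions\<close>

lemma abs_exp_minus_one_le: "\<bar>exp b - 1\<bar> \<le> \<bar>b\<bar> * exp \<bar>b\<bar>" for b :: real
proof -
  have lower: "b \<le> exp b - 1"
    using exp_ge_add_one_self[of b] by linarith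
  have "1 - b \<le> exp (- b)"
    using exp_ge_add_one_self[of "- b"] by simp
  then have upper: "exp b - 1 \<le> b * exp b"
    by (simp add: exp_minus field_simps)
  show ?thesis
  proof (cases "b \<ge> 0")
    case True
    with lower upper show ?thesis by simp
  next
    case False
    have "b * exp b \<le> 0" "\<bar>b\<bar> \<le> \<bar>b\<bar> * exp \<bar>b\<bar>"
      using False by (simp_all add: mult_nonpos_nonneg)
    with False lower upper show ?thesis by linarith
  qed
qed

lemma integrable_abs_power_exp_abs:
  fixes a :: real
  assumes "a > 0"
  shows "integrable lborel (\<lambda>x. \<bar>x\<bar> ^ k * exp (- a * \<bar>x\<bar>))"
proof -
  define p where "p y = y ^ k * exp (- y) * indicator {0..} y" for y :: real
  have "integrable lborel p"
    unfolding p_def using has_bochner_integral_I0i_power_exp_m' by (rule integrable.intros)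
  then have "integrable lborel (\<lambda>x. p (0 + a * x))" "integrable lborel (\<lambda>x. p (0 + (- a) * x))"
    using assms by (intro lborel_integrable_real_affine; simp)+
  then have "integrable lborel (\<lambda>x. (p (a * x) + p (- a * x)) / a ^ k)"
    by auto
  then show ?thesis
  proof (rule Bochner_Integration.integrable_bound)
    have p_nonneg: "p y \<ge> 0" for y
      by (simp add: p_def split: split_indicator)
    show "AE x in lborel. norm (\<bar>x\<bar> ^ k * exp (- a * \<bar>x\<bar>)) \<le> norm ((p (a * x) + p (- a * x)) / a ^ k)"
    proof (rule AE_I2)
      fix x :: real
      have "a ^ k * (\<bar>x\<bar> ^ k * exp (- a * \<bar>x\<bar>)) = p (a * \<bar>x\<bar>)"
        using assms by (simp add: p_def power_mult_distrib)
      also have "\<dots> \<le> p (a * x) + p (- a * x)"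
        using p_nonneg[of "a * x"] p_nonneg[of "- a * x"] by (cases "x \<ge> 0") auto
      finally show "norm (\<bar>x\<bar> ^ k * exp (- a * \<bar>x\<bar>)) \<le> norm ((p (a * x) + p (- a * x)) / a ^ k)"
        using assms p_nonneg[of "a * x"] p_nonneg[of "- a * x"] by (simp add: field_simps)
    qed
  qed simp
qed

lemma tendsto_abs_power_exp_abs:
  fixes a :: real
  assumes "a > 0"
  shows "((\<lambda>x. \<bar>x\<bar> ^ k * exp (- a * \<bar>x\<bar>)) \<longlongrightarrow> 0) at_top"
    and "((\<lambda>x. \<bar>x\<bar> ^ k * exp (- a * \<bar>x\<bar>)) \<longlongrightarrow> 0) at_bot"
  using assms by real_asymp+

context
  fixes h :: "real \<Rightarrow> real" and K a :: real
  assumes h_measurable [measurable]: "h \<in> borel_measurable borel"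
    and h_bound: "\<And>x. \<bar>h x\<bar> \<le> K * exp (- a * \<bar>x\<bar>)"
    and a_pos: "a > 0"
begin

lemma abs_power_exp_mult_bound:
  "\<bar>x ^ k * exp (- s * x) * h x\<bar> \<le> K * (\<bar>x\<bar> ^ k * exp (- (a - \<bar>s\<bar>) * \<bar>x\<bar>))"
proof -
  have "exp (- s * x) \<le> exp (\<bar>s\<bar> * \<bar>x\<bar>)"
    by (simp add: abs_mult[symmetric])
  then have "\<bar>x ^ k * exp (- s * x) * h x\<bar> \<le> \<bar>x\<bar> ^ k * exp (\<bar>s\<bar> * \<bar>x\<bar>) * (K * exp (- a * \<bar>x\<bar>))"
    unfolding abs_mult power_abs using h_bound[of x]
    by (intro mult_mono) auto
  also have "\<dots> = K * (\<bar>x\<bar> ^ k * exp (- (a - \<bar>s\<bar>) * \<bar>x\<bar>))"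
    by (simp add: mult_exp_exp algebra_simps)
  finally show ?thesis .
qed

lemma integrable_power_exp_mult_exp_decay:
  assumes "\<bar>s\<bar> < a"
  shows "integrable lborel (\<lambda>x. x ^ k * exp (- s * x) * h x)"
proof (rule Bochner_Integration.integrable_bound)
  show "integrable lborel (\<lambda>x. K * (\<bar>x\<bar> ^ k * exp (- (a - \<bar>s\<bar>) * \<bar>x\<bar>)))"
    using assms by (intro integrable_mult_right integrable_abs_power_exp_abs) simp
  show "AE x in lborel. norm (x ^ k * exp (- s * x) * h x) \<le> norm (K * (\<bar>x\<bar> ^ k * exp (- (a - \<bar>s\<bar>) * \<bar>x\<bar>)))"
    using order_trans[OF abs_power_exp_mult_bound abs_ge_self] by simp
qed simp

lemma integrable_power_mult_exp_decay: "integrable lborel (\<lambda>x. x ^ k * h x)"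
  using integrable_power_exp_mult_exp_decay[of 0 k] a_pos by simp

lemma tendsto_power_mult_exp_decay_at_top: "((\<lambda>x. x ^ k * h x) \<longlongrightarrow> 0) at_top"
  and tendsto_power_mult_exp_decay_at_bot: "((\<lambda>x. x ^ k * h x) \<longlongrightarrow> 0) at_bot"
proof -
  have bound: "\<forall>\<^sub>F x in F. norm (x ^ k * h x) \<le> norm (K * (\<bar>x\<bar> ^ k * exp (- a * \<bar>x\<bar>))) * 1" for F
    using order_trans[OF abs_power_exp_mult_bound[of _ k 0] abs_ge_self] by simp
  show "((\<lambda>x. x ^ k * h x) \<longlongrightarrow> 0) at_top" "((\<lambda>x. x ^ k * h x) \<longlongrightarrow> 0) at_bot"
    by (intro tendsto_0_le[OF tendsto_mult_right_zero bound] tendsto_abs_power_exp_abs a_pos)+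
qed

lemma difference_quotient_exp_decay_bound:
  assumes "\<bar>s\<bar> < a / 2"
  shows "\<bar>x ^ k * ((exp (- s * x) - 1) / s) * h x\<bar> \<le> K * (\<bar>x\<bar> ^ Suc k * exp (- (a / 2) * \<bar>x\<bar>))"
proof -
  have "\<bar>exp (- s * x) - 1\<bar> \<le> \<bar>s\<bar> * (\<bar>x\<bar> * exp (\<bar>s\<bar> * \<bar>x\<bar>))"
    using abs_exp_minus_one_le[of "- s * x"] by (simp add: abs_mult)
  also have "\<dots> \<le> \<bar>s\<bar> * (\<bar>x\<bar> * exp (a / 2 * \<bar>x\<bar>))"
    using assms mult_right_mono[of "\<bar>s\<bar>" "a / 2" "\<bar>x\<bar>"] by (intro mult_left_mono) auto
  finally have "\<bar>(exp (- s * x) - 1) / s\<bar> \<le> \<bar>x\<bar> * exp (a / 2 * \<bar>x\<bar>)"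
    by (cases "s = 0") (simp_all add: abs_divide field_simps)
  then have "\<bar>x ^ k * ((exp (- s * x) - 1) / s) * h x\<bar> \<le>
      \<bar>x\<bar> ^ k * (\<bar>x\<bar> * exp (a / 2 * \<bar>x\<bar>)) * (K * exp (- a * \<bar>x\<bar>))"
    unfolding abs_mult power_abs using h_bound[of x] by (intro mult_mono) auto
  also have "\<dots> = K * (\<bar>x\<bar> ^ Suc k * exp (- (a / 2) * \<bar>x\<bar>))"
    by (simp add: mult_exp_exp algebra_simps)
  finally show ?thesis .
qed

lemma laplace_power_mult_exp_decay_has_real_derivative:
  "((\<lambda>s. \<integral>x. x ^ k * exp (- s * x) * h x \<partial>lborel) has_real_derivative
      - (\<integral>x. x ^ Suc k * h x \<partial>lborel)) (at 0)"
proof -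
  define q where "q s x = x ^ k * ((exp (- s * x) - 1) / s) * h x" for s x
  define w where "w x = K * (\<bar>x\<bar> ^ Suc k * exp (- (a / 2) * \<bar>x\<bar>))" for x
  have near: "\<forall>\<^sub>F s in at 0. \<bar>s\<bar> < a / 2"
    using a_pos by (auto simp: eventually_at intro!: exI[of _ "a / 2"])
  define \<Phi> where "\<Phi> s = (\<integral>x. x ^ k * exp (- s * x) * h x \<partial>lborel)" for s
  have quotient: "(\<Phi> s - \<Phi> 0) / s = (\<integral>x. q s x \<partial>lborel)" if "\<bar>s\<bar> < a" for s
  proof -
    have "(\<Phi> s - \<Phi> 0) / s = (\<integral>x. x ^ k * exp (- s * x) * h x - x ^ k * exp (- 0 * x) * h x \<partial>lborel) / s"
      unfolding \<Phi>_def using integrable_power_exp_mult_exp_decay[OF that, of k] integrable_power_exp_mult_exp_decay[of 0 k] a_pos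
      by (subst Bochner_Integration.integral_diff) auto
    also have "\<dots> = (\<integral>x. q s x \<partial>lborel)"
      unfolding q_def by (subst integral_divide_zero[symmetric]) (simp add: diff_divide_distrib algebra_simps)
    finally show ?thesis .
  qed
  have "((\<lambda>s. \<integral>x. q s x \<partial>lborel) \<longlongrightarrow> (\<integral>x. x ^ k * (- x) * h x \<partial>lborel)) (at 0)"
  proof (rule integral_dominated_convergence_at[where w = w])
    show "integrable lborel w"
      unfolding w_def using a_pos by (intro integrable_mult_right integrable_abs_power_exp_abs) simp
    show "AE x in lborel. ((\<lambda>s. q s x) \<longlongrightarrow> x ^ k * (- x) * h x) (at 0)"
    proof (rule AE_I2)
      fix x :: real
      have "((\<lambda>s. exp (- s * x)) has_real_derivative - x) (at 0)"
        by (auto intro!: derivative_eq_intros)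
      then have "((\<lambda>s. (exp (- s * x) - 1) / s) \<longlongrightarrow> - x) (at 0)"
        by (simp add: DERIV_def)
      then show "((\<lambda>s. q s x) \<longlongrightarrow> x ^ k * (- x) * h x) (at 0)"
        unfolding q_def by (intro tendsto_intros)
    qed
    show "\<forall>\<^sub>F s in at 0. AE x in lborel. norm (q s x) \<le> w x"
      using near
    proof eventually_elim
      case (elim s)
      show ?case
        unfolding q_def w_def real_norm_def by (intro AE_I2 difference_quotient_exp_decay_bound elim)
    qed
  qed (simp_all add: q_def)
  then have "((\<lambda>s. (\<Phi> (0 + s) - \<Phi> 0) / s) \<longlongrightarrow> - (\<integral>x. x ^ Suc k * h x \<partial>lborel)) (at 0)"
    using near by (simp add: tendsto_cong[OF eventually_mono[OF _ quotient]] mult.commute)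
  then show ?thesis
    by (simp add: DERIV_def \<Phi>_def)
qed

end

section \<open>Densities with a nondecreasing concave score\<close>

locale concave_score_density =
  fixes f g g' :: "real \<Rightarrow> real"
  assumes density_pos: "\<And>x. f x > 0"
    and density_deriv: "\<And>x. (f has_real_derivative - g x * f x) (at x)"
    and score_deriv: "\<And>x. (g has_real_derivative g' x) (at x)"
    and score_deriv_nonneg: "\<And>x. g' x \<ge> 0"
    and score_deriv_antimono: "\<And>x y. x \<le> y \<Longrightarrow> g' y \<le> g' x"
    and integrable_moment: "\<And>k. integrable lborel (\<lambda>x. x ^ k * f x)"
    and moment_tendsto_at_top: "\<And>k. ((\<lambda>x. x ^ k * f x) \<longlongrightarrow> 0) at_top"
    and moment_tendsto_at_bot: "\<And>k. ((\<lambda>x. x ^ k * f x) \<longlongrightarrow> 0) at_bot"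
begin

definition moment :: "nat \<Rightarrow> real" where
  "moment k = (\<integral>x. x ^ k * f x \<partial>lborel)"

definition mean :: real where
  "mean = moment 1 / moment 0"

definition central_moment :: "nat \<Rightarrow> real" where
  "central_moment k = (\<integral>x. (x - mean) ^ k * f x \<partial>lborel)"

definition lower_central_moment :: "nat \<Rightarrow> real \<Rightarrow> real" where
  "lower_central_moment k = integral_upto (\<lambda>x. (x - mean) ^ k * f x)"

lemma moment_0_pos: "moment 0 > 0"
  unfolding moment_def using integrable_moment[of 0] density_pos by (simp add: integral_lborel_pos)

lemma integrable_central_moment: "integrable lborel (\<lambda>x. (x - mean) ^ k * f x)"
proof -
  have "(x - mean) ^ k * f x = (\<Sum>i\<le>k. (of_nat (k choose i) * (- mean) ^ (k - i)) * (x ^ i * f x))" for x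
    using binomial_ring[of x "- mean" k] by (simp add: sum_distrib_left sum_distrib_right algebra_simps)
  then show ?thesis
    by (simp add: integrable_moment)
qed

lemma has_bochner_integral_moment: "has_bochner_integral lborel (\<lambda>x. x ^ k * f x) (moment k)"
  unfolding moment_def by (rule has_bochner_integral_integrable[OF integrable_moment])

lemma central_moment_0: "central_moment 0 = moment 0"
  by (simp add: central_moment_def moment_def)

lemma central_moment_1: "central_moment 1 = 0"
proof -
  have expand: "(\<lambda>x. (x - mean) ^ 1 * f x) = (\<lambda>x. x ^ 1 * f x - mean * (x ^ 0 * f x))"
    by (simp add: algebra_simps)
  have "central_moment 1 = moment 1 - mean * moment 0"
    unfolding central_moment_def expand
    by (intro has_bochner_integral_integral_eq has_bochner_integral_diff has_bochner_integral_mult_right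
        has_bochner_integral_moment)
  then show ?thesis
    using moment_0_pos by (simp add: mean_def)
qed

lemma central_moment_3:
  "central_moment 3 = moment 3 - 3 * mean * moment 2 + 3 * mean\<^sup>2 * moment 1 - mean ^ 3 * moment 0"
proof -
  have expand: "(\<lambda>x. (x - mean) ^ 3 * f x) =
      (\<lambda>x. x ^ 3 * f x - 3 * mean * (x ^ 2 * f x) + 3 * mean\<^sup>2 * (x ^ 1 * f x) - mean ^ 3 * (x ^ 0 * f x))"
    by (simp add: fun_eq_iff algebra_simps power2_eq_square power3_eq_cube)
  show ?thesis
    unfolding central_moment_def expand
    by (intro has_bochner_integral_integral_eq has_bochner_integral_diff has_bochner_integral_add
        has_bochner_integral_mult_right has_bochner_integral_moment)
qed

lemma third_cumulant:
  "moment 3 / moment 0 - 3 * (moment 1 / moment 0) * (moment 2 / moment 0) + 2 * (moment 1 / moment 0) ^ 3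
    = central_moment 3 / moment 0"
  using moment_0_pos by (simp add: central_moment_3 mean_def field_simps power2_eq_square power3_eq_cube)

lemma continuous_density: "continuous_on UNIV f"
  using density_deriv by (meson DERIV_isCont continuous_at_imp_continuous_on)

lemma lower_central_moment_deriv:
  "(lower_central_moment k has_real_derivative (y - mean) ^ k * f y) (at y)"
  unfolding lower_central_moment_def
  using continuous_density integrable_central_moment
  by (intro integral_upto_has_real_derivative continuous_intros)

lemma lower_central_moment_tendsto_at_bot: "(lower_central_moment k \<longlongrightarrow> 0) at_bot"
  unfolding lower_central_moment_def using integrable_central_moment by (rule integral_upto_tendsto_at_bot)

lemma lower_central_moment_tendsto_at_top: "(lower_central_moment k \<longlongrightarrow> central_moment k) at_top"
  unfolding lower_central_moment_def central_moment_def
  using integrable_central_moment by (rule integral_upto_tendsto_at_top)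

lemma lower_central_moment_1_tendsto_at_top: "(lower_central_moment 1 \<longlongrightarrow> 0) at_top"
  using lower_central_moment_tendsto_at_top[of 1] unfolding central_moment_1 .

lemma deviation_density_tendsto_at_top: "((\<lambda>y. (y - mean) * f y) \<longlongrightarrow> 0) at_top"
  and deviation_density_tendsto_at_bot: "((\<lambda>y. (y - mean) * f y) \<longlongrightarrow> 0) at_bot"
  using tendsto_diff[OF moment_tendsto_at_top[of 1] tendsto_mult_right_zero[OF moment_tendsto_at_top[of 0]]]
    tendsto_diff[OF moment_tendsto_at_bot[of 1] tendsto_mult_right_zero[OF moment_tendsto_at_bot[of 0]]]
  by (simp_all add: algebra_simps)

lemma score_mono:
  assumes "x \<le> y"
  shows "g x \<le> g y"
proof (rule DERIV_nonneg_imp_nondecreasing[OF assms])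
  show "\<exists>d. (g has_real_derivative d) (at s) \<and> d \<ge> 0" for s
    using score_deriv[of s] score_deriv_nonneg[of s] by blast
qed

lemma score_below_tangent: "g y \<le> g a + g' a * (y - a)"
  using score_deriv score_deriv_antimono by (rule antimono_deriv_imp_below_tangent)

text \<open>Jensen's inequality for the concave score: \<open>g * f = - f'\<close> integrates to \<open>0\<close>,
  and \<open>\<Phi>\<close> below is a primitive of \<open>(g mean + g' mean * (y - mean) - g y) * f y \<ge> 0\<close>.\<close>

lemma score_mean_nonneg: "g mean \<ge> 0"
proof -
  define \<Phi> where "\<Phi> y = f y + g mean * lower_central_moment 0 y + g' mean * lower_central_moment 1 y" for y
  have \<Phi>_deriv: "(\<Phi> has_real_derivative f y * (g mean + g' mean * (y - mean) - g y)) (at y)" for y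
  proof -
    have "(\<Phi> has_real_derivative - g y * f y + g mean * ((y - mean) ^ 0 * f y) + g' mean * ((y - mean) ^ 1 * f y)) (at y)"
      unfolding \<Phi>_def[abs_def]
      by (intro derivative_intros DERIV_cmult density_deriv lower_central_moment_deriv)
    then show ?thesis
      by (simp add: algebra_simps)
  qed
  have \<Phi>_deriv_nonneg: "f y * (g mean + g' mean * (y - mean) - g y) \<ge> 0" for y
    using score_below_tangent[of y mean] density_pos[of y] by simp
  have "(\<Phi> \<longlongrightarrow> 0 + g mean * 0 + g' mean * 0) at_bot"
    unfolding \<Phi>_def[abs_def] using moment_tendsto_at_bot[of 0]
    by (intro tendsto_intros lower_central_moment_tendsto_at_bot) simp
  then have "0 \<le> \<Phi> 0"
    using DERIV_nonneg_imp_lim_at_bot_le[OF \<Phi>_deriv \<Phi>_deriv_nonneg] by simp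
  moreover have "(\<Phi> \<longlongrightarrow> 0 + g mean * moment 0 + g' mean * 0) at_top"
    unfolding \<Phi>_def[abs_def] using moment_tendsto_at_top[of 0]
      lower_central_moment_tendsto_at_top[of 0, unfolded central_moment_0]
      lower_central_moment_1_tendsto_at_top
    by (intro tendsto_intros) simp_all
  then have "\<Phi> 0 \<le> g mean * moment 0"
    using DERIV_nonneg_imp_le_lim_at_top[OF \<Phi>_deriv \<Phi>_deriv_nonneg] by simp
  ultimately have "0 \<le> g mean * moment 0"
    by linarith
  then show ?thesis
    using moment_0_pos by (simp add: zero_le_mult_iff)
qed

lemma score_pos_somewhere: "\<exists>y. g y > 0"
proof (rule ccontr)
  assume "\<nexists>y. g y > 0"
  then have f_deriv_nonneg: "\<exists>d. (f has_real_derivative d) (at s) \<and> 0 \<le> d" for s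
    using density_deriv[of s] density_pos[of s]
    by (intro exI[of _ "- g s * f s"]) (simp add: not_less mult_nonpos_nonneg less_imp_le)
  then have "f 0 \<le> f y" if "0 \<le> y" for y
    by (rule DERIV_nonneg_imp_nondecreasing[OF that])
  then have "f 0 \<le> 0"
    using moment_tendsto_at_top[of 0]
    by (intro tendsto_lowerbound[of f 0 at_top]) (auto intro: eventually_ge_at_top[THEN eventually_mono])
  with density_pos[of 0] show False
    by simp
qed

lemma score_zero_imp_le_mean:
  assumes "g x = 0"
  shows "x \<le> mean"
proof (rule ccontr)
  assume "\<not> x \<le> mean"
  have "0 \<le> g' x * (mean - x)"
    using score_below_tangent[of mean x] score_mean_nonneg assms by simp
  then have "g' x = 0"
    using \<open>\<not> x \<le> mean\<close> score_deriv_nonneg[of x] by (simp add: zero_le_mult_iff)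
  then have "g y \<le> 0" for y
    using score_below_tangent[of y x] assms by simp
  with score_pos_somewhere show False
    by (meson not_less)
qed

lemma deviation_mul_score_deriv_le_score: "(y - mean) * g' y \<le> g y"
  using score_below_tangent[of mean y] score_mean_nonneg by (simp add: algebra_simps)

lemma lower_central_moment_1_nonpos: "lower_central_moment 1 y \<le> 0"
proof (cases "y \<le> mean")
  case True
  have "- 0 \<le> - lower_central_moment 1 y"
  proof (rule DERIV_nonneg_imp_lim_at_bot_le[where F = "\<lambda>s. - lower_central_moment 1 s"])
    show "((\<lambda>s. - lower_central_moment 1 s) has_real_derivative - ((s - mean) ^ 1 * f s)) (at s)"
      if "s \<le> y" for s
      by (intro derivative_intros lower_central_moment_deriv)
    show "- ((s - mean) ^ 1 * f s) \<ge> 0" if "s \<le> y" for s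
      using that True density_pos[of s] by (simp add: mult_nonpos_nonneg)
    show "((\<lambda>s. - lower_central_moment 1 s) \<longlongrightarrow> - 0) at_bot"
      by (intro tendsto_intros lower_central_moment_tendsto_at_bot)
  qed
  then show ?thesis
    by simp
next
  case False
  show ?thesis
  proof (rule DERIV_nonneg_imp_le_lim_at_top[OF lower_central_moment_deriv])
    show "(s - mean) ^ 1 * f s \<ge> 0" if "s \<ge> y" for s
      using that False density_pos[of s] by simp
    show "(lower_central_moment 1 \<longlongrightarrow> 0) at_top"
      by (rule lower_central_moment_1_tendsto_at_top)
  qed
qed

text \<open>\<open>score_mul_lower_central_moment_1_le\<close> below says that \<open>deviation_ratio\<close> is
  nondecreasing. Where \<open>g\<close> does not vanish, it follows from the monotonicity of
  \<open>lower_central_moment 1 y + (y - mean) * f y / g y\<close> on the half-line on which \<open>g\<close> keeps its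
  sign; the concavity of \<open>g\<close> enters through \<open>deviation_mul_score_deriv_le_score\<close>.\<close>

lemma lower_central_moment_1_plus_quotient_deriv:
  assumes "g y \<noteq> 0"
  shows "((\<lambda>y. lower_central_moment 1 y + (y - mean) * f y / g y) has_real_derivative
    f y * (g y - (y - mean) * g' y) / (g y)\<^sup>2) (at y)"
  using assms
  by (auto intro!: derivative_eq_intros lower_central_moment_deriv density_deriv score_deriv
      simp: field_simps power2_eq_square)

lemma lower_central_moment_1_plus_quotient_deriv_nonneg: "f y * (g y - (y - mean) * g' y) / (g y)\<^sup>2 \<ge> 0"
  using deviation_mul_score_deriv_le_score[of y] density_pos[of y] by simp

lemma score_mul_lower_central_moment_1_le_of_pos:
  assumes pos: "g x > 0"
  shows "g x * lower_central_moment 1 x + (x - mean) * f x \<le> 0"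
proof -
  define N where "N y = lower_central_moment 1 y + (y - mean) * f y / g y" for y
  have "((\<lambda>y. (y - mean) * f y / g y) \<longlongrightarrow> 0) at_top"
  proof (rule tendsto_0_le[OF deviation_density_tendsto_at_top])
    show "\<forall>\<^sub>F y in at_top. norm ((y - mean) * f y / g y) \<le> norm ((y - mean) * f y) * (1 / g x)"
      using eventually_ge_at_top[of x]
    proof eventually_elim
      case (elim y)
      then show ?case
        using pos score_mono[OF elim] by (simp add: abs_divide divide_simps mult_left_mono)
    qed
  qed
  then have "(N \<longlongrightarrow> 0) at_top"
    unfolding N_def[abs_def] using tendsto_add[OF lower_central_moment_1_tendsto_at_top] by simp
  then have "N x \<le> 0"
  proof (rule DERIV_nonneg_imp_le_lim_at_top[rotated 2])
    show "(N has_real_derivative f t * (g t - (t - mean) * g' t) / (g t)\<^sup>2) (at t)" if "t \<ge> x" for t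
      unfolding N_def[abs_def] using pos score_mono[OF that]
      by (intro lower_central_moment_1_plus_quotient_deriv) simp
  qed (rule lower_central_moment_1_plus_quotient_deriv_nonneg)
  then have "g x * N x \<le> 0"
    using pos by (simp add: mult_nonneg_nonpos)
  moreover have "g x * N x = g x * lower_central_moment 1 x + (x - mean) * f x"
    using pos by (simp add: N_def field_simps)
  ultimately show ?thesis
    by linarith
qed

lemma score_mul_lower_central_moment_1_le_of_neg:
  assumes neg: "g x < 0"
  shows "g x * lower_central_moment 1 x + (x - mean) * f x \<le> 0"
proof -
  define N where "N y = lower_central_moment 1 y + (y - mean) * f y / g y" for y
  have "((\<lambda>y. (y - mean) * f y / g y) \<longlongrightarrow> 0) at_bot"
  proof (rule tendsto_0_le[OF deviation_density_tendsto_at_bot])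
    show "\<forall>\<^sub>F y in at_bot. norm ((y - mean) * f y / g y) \<le> norm ((y - mean) * f y) * (1 / - g x)"
      using eventually_le_at_bot[of x]
    proof eventually_elim
      case (elim y)
      then show ?case
        using neg score_mono[OF elim] by (simp add: abs_divide divide_simps mult_left_mono)
    qed
  qed
  then have "(N \<longlongrightarrow> 0) at_bot"
    unfolding N_def[abs_def] using tendsto_add[OF lower_central_moment_tendsto_at_bot] by simp
  then have "0 \<le> N x"
  proof (rule DERIV_nonneg_imp_lim_at_bot_le[rotated 2])
    show "(N has_real_derivative f t * (g t - (t - mean) * g' t) / (g t)\<^sup>2) (at t)" if "t \<le> x" for t
      unfolding N_def[abs_def] using neg score_mono[OF that]
      by (intro lower_central_moment_1_plus_quotient_deriv) simp
  qed (rule lower_central_moment_1_plus_quotient_deriv_nonneg)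
  then have "g x * N x \<le> 0"
    using neg by (simp add: mult_nonpos_nonneg)
  moreover have "g x * N x = g x * lower_central_moment 1 x + (x - mean) * f x"
    using neg by (simp add: N_def field_simps)
  ultimately show ?thesis
    by linarith
qed

lemma score_mul_lower_central_moment_1_le: "g x * lower_central_moment 1 x + (x - mean) * f x \<le> 0"
proof (cases "g x = 0")
  case True
  then show ?thesis
    using score_zero_imp_le_mean[OF True] density_pos[of x] by (simp add: mult_nonpos_nonneg)
next
  case False
  then show ?thesis
    using score_mul_lower_central_moment_1_le_of_pos score_mul_lower_central_moment_1_le_of_neg
    by (meson linorder_neqE_linordered_idom)
qed

text \<open>As \<open>central_moment 1 = 0\<close>, \<open>f y * deviation_ratio y\<close> is the integral of
  \<open>(x - mean) * f x\<close> over \<open>[y, \<infinity>)\<close>.\<close>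

definition deviation_ratio :: "real \<Rightarrow> real" where
  "deviation_ratio y = - lower_central_moment 1 y / f y"

lemma deviation_ratio_mono:
  assumes "x \<le> y"
  shows "deviation_ratio x \<le> deviation_ratio y"
proof (rule DERIV_nonneg_imp_nondecreasing[OF assms])
  fix s
  have "(deviation_ratio has_real_derivative
      - (g s * lower_central_moment 1 s + (s - mean) * f s) / f s) (at s)"
    unfolding deviation_ratio_def[abs_def] using density_pos[of s]
    by (auto intro!: derivative_eq_intros lower_central_moment_deriv density_deriv
        simp: field_simps power2_eq_square)
  moreover have "- (g s * lower_central_moment 1 s + (s - mean) * f s) / f s \<ge> 0"
    using score_mul_lower_central_moment_1_le[of s] density_pos[of s] by simp
  ultimately show "\<exists>d. (deviation_ratio has_real_derivative d) (at s) \<and> d \<ge> 0"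
    by blast
qed

lemma lower_central_moment_3_bound:
  assumes "y \<ge> mean"
  shows "lower_central_moment 3 y - (y - mean)\<^sup>2 * lower_central_moment 1 y \<le> central_moment 3"
proof (rule DERIV_nonneg_imp_le_lim_at_top
    [where F = "\<lambda>s. lower_central_moment 3 s - (y - mean)\<^sup>2 * lower_central_moment 1 s"])
  show "((\<lambda>s. lower_central_moment 3 s - (y - mean)\<^sup>2 * lower_central_moment 1 s) has_real_derivative
      (s - mean) * f s * ((s - mean)\<^sup>2 - (y - mean)\<^sup>2)) (at s)" if "s \<ge> y" for s
    by (auto intro!: derivative_eq_intros lower_central_moment_deriv simp: algebra_simps power2_eq_square power3_eq_cube)
  show "(s - mean) * f s * ((s - mean)\<^sup>2 - (y - mean)\<^sup>2) \<ge> 0" if "s \<ge> y" for s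
    using that assms density_pos[of s] by (auto intro!: mult_nonneg_nonneg power_mono)
  show "((\<lambda>s. lower_central_moment 3 s - (y - mean)\<^sup>2 * lower_central_moment 1 s) \<longlongrightarrow> central_moment 3) at_top"
    using tendsto_diff[OF lower_central_moment_tendsto_at_top[of 3]
        tendsto_mult_right_zero[OF lower_central_moment_1_tendsto_at_top]]
    by simp
qed

lemma deviation_ratio_mean_nonneg: "deviation_ratio mean \<ge> 0"
  using lower_central_moment_1_nonpos[of mean] density_pos[of mean]
  unfolding deviation_ratio_def by (simp add: divide_nonpos_pos)

text \<open>A primitive of \<open>(y - mean) * f y * (deviation_ratio y - deviation_ratio mean)\<close>, found by
  integrating \<open>(y - mean)\<^sup>3 * f y\<close> by parts against \<open>lower_central_moment 1\<close>; it tends to \<open>0\<close>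
  at \<open>-\<infinity>\<close> and to \<open>central_moment 3 / 2\<close> at \<open>+\<infinity>\<close>.\<close>

definition skewness_primitive :: "real \<Rightarrow> real" where
  "skewness_primitive y = (lower_central_moment 3 y - (y - mean)\<^sup>2 * lower_central_moment 1 y) / 2
    - deviation_ratio mean * lower_central_moment 1 y"

lemma skewness_primitive_deriv:
  "(skewness_primitive has_real_derivative (y - mean) * f y * (deviation_ratio y - deviation_ratio mean)) (at y)"
  unfolding skewness_primitive_def[abs_def] using density_pos[of y] density_pos[of mean]
  by (auto intro!: derivative_eq_intros lower_central_moment_deriv
      simp: deviation_ratio_def field_simps power2_eq_square power3_eq_cube)

lemma skewness_primitive_mono:
  assumes "x \<le> y"
  shows "skewness_primitive x \<le> skewness_primitive y"
proof (rule DERIV_nonneg_imp_nondecreasing[OF assms])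
  fix s
  have "(s - mean) * f s * (deviation_ratio s - deviation_ratio mean) \<ge> 0"
  proof (cases "s \<le> mean")
    case True
    have "(s - mean) * f s \<le> 0"
      using True density_pos[of s] by (intro mult_nonpos_nonneg) auto
    moreover have "deviation_ratio s \<le> deviation_ratio mean"
      using True by (rule deviation_ratio_mono)
    ultimately show ?thesis
      by (simp add: mult_nonpos_nonpos)
  next
    case False
    have "(s - mean) * f s \<ge> 0"
      using False density_pos[of s] by (intro mult_nonneg_nonneg) auto
    moreover have "deviation_ratio mean \<le> deviation_ratio s"
      using False by (intro deviation_ratio_mono) simp
    ultimately show ?thesis
      by simp
  qed
  with skewness_primitive_deriv
  show "\<exists>d. (skewness_primitive has_real_derivative d) (at s) \<and> d \<ge> 0"
    by blast
qed

lemma skewness_primitive_lower_bound: "lower_central_moment 3 y / 2 \<le> skewness_primitive y"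
proof -
  have "deviation_ratio mean * lower_central_moment 1 y \<le> 0"
    "(y - mean)\<^sup>2 * lower_central_moment 1 y \<le> 0"
    using lower_central_moment_1_nonpos[of y] deviation_ratio_mean_nonneg
    by (simp_all add: mult_nonneg_nonpos)
  then show ?thesis
    by (simp add: skewness_primitive_def field_simps)
qed

lemma skewness_primitive_upper_bound:
  "y \<ge> mean \<Longrightarrow>
    skewness_primitive y \<le> central_moment 3 / 2 - deviation_ratio mean * lower_central_moment 1 y"
  using lower_central_moment_3_bound[of y] by (simp add: skewness_primitive_def)

theorem central_moment_3_nonneg: "central_moment 3 \<ge> 0"
proof -
  have "0 \<le> skewness_primitive 0"
  proof (rule tendsto_upperbound)
    show "((\<lambda>y. lower_central_moment 3 y / 2) \<longlongrightarrow> 0) at_bot"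
      using tendsto_divide[OF lower_central_moment_tendsto_at_bot[of 3] tendsto_const, of 2] by simp
    show "\<forall>\<^sub>F y in at_bot. lower_central_moment 3 y / 2 \<le> skewness_primitive 0"
      using eventually_le_at_bot[of 0]
    proof eventually_elim
      case (elim y)
      show ?case
        using skewness_primitive_lower_bound[of y] skewness_primitive_mono[OF elim] by linarith
    qed
  qed simp
  moreover have "skewness_primitive 0 \<le> central_moment 3 / 2"
  proof (rule tendsto_lowerbound)
    show "((\<lambda>y. central_moment 3 / 2 - deviation_ratio mean * lower_central_moment 1 y)
        \<longlongrightarrow> central_moment 3 / 2) at_top"
      using tendsto_diff[OF tendsto_const tendsto_mult_right_zero[OF lower_central_moment_1_tendsto_at_top]]
      by simp
    show "\<forall>\<^sub>F y in at_top.
        skewness_primitive 0 \<le> central_moment 3 / 2 - deviation_ratio mean * lower_central_moment 1 y"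
      using eventually_ge_at_top[of "max 0 mean"]
    proof eventually_elim
      case (elim y)
      show ?case
        using skewness_primitive_upper_bound[of y] skewness_primitive_mono[of 0 y] elim by simp
    qed
  qed simp
  ultimately show ?thesis
    by simp
qed

end

section \<open>Potentials of O'Connell--Yor type\<close>

lemma exp_potential_le:
  fixes V :: "real \<Rightarrow> real"
  assumes V_nonneg: "\<And>x. V x \<ge> 0" and V_quadratic: "\<And>x. x \<le> - C \<Longrightarrow> V x \<ge> c * x\<^sup>2"
    and "c > 0" "C \<ge> 0" "t > 0"
  shows "exp (- t * x - V x) \<le> exp (t\<^sup>2 / c + 2 * t * C) * exp (- t * \<bar>x\<bar>)"
proof -
  have "- t * x - V x \<le> t\<^sup>2 / c + 2 * t * C - t * \<bar>x\<bar>"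
  proof (cases "x \<le> - C")
    case True
    have "0 \<le> (c * x + t)\<^sup>2 / c"
      using \<open>c > 0\<close> by simp
    also have "\<dots> = c * x\<^sup>2 + 2 * t * x + t\<^sup>2 / c"
      using \<open>c > 0\<close> by (simp add: power2_eq_square field_simps)
    moreover have "t * C \<ge> 0" "t\<^sup>2 / c \<ge> 0"
      using assms(3-5) by simp_all
    ultimately show ?thesis
      using True V_quadratic[OF True] V_nonneg[of x] by (simp add: abs_if)
  next
    case False
    then have "t * (- x) \<le> t * C"
      using \<open>t > 0\<close> by (intro mult_left_mono) auto
    moreover have "t * C \<ge> 0" "t\<^sup>2 / c \<ge> 0"
      using assms(3-5) by simp_all
    ultimately show ?thesis
      using V_nonneg[of x] by (auto simp: abs_if)
  qed
  then show ?thesis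
    by (simp add: mult_exp_exp)
qed

lemma OConnell_Yor_type_nderiv:
  assumes "OConnell_Yor_type V"
  shows "(nderiv n V has_real_derivative nderiv (Suc n) V x) (at x)"
proof -
  obtain D where D0: "D 0 = V" and D: "\<And>n x. (D n has_real_derivative D (Suc n) x) (at x)"
    using assms unfolding OConnell_Yor_type_def smooth_real_def by blast
  have "nderiv m V = D m" for m
    by (rule ext, rule nderiv_eq_on_open[of UNIV D V m m]) (use D0 D in auto)
  then show ?thesis
    using D by simp
qed

lemma OConnell_Yor_type_deriv: "OConnell_Yor_type V \<Longrightarrow> (V has_real_derivative nderiv 1 V x) (at x)"
  using OConnell_Yor_type_nderiv[of V 0] by (simp add: nderiv_def)

lemma OConnell_Yor_type_measurable:
  "OConnell_Yor_type V \<Longrightarrow> (\<lambda>x. exp (- t * x - V x)) \<in> borel_measurable borel"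
  using OConnell_Yor_type_deriv[of V]
  by (intro borel_measurable_continuous_onI continuous_intros)
     (meson DERIV_isCont continuous_at_imp_continuous_on)

lemma OConnell_Yor_type_density_bound:
  assumes "OConnell_Yor_type V" and "t > 0"
  obtains K where "\<And>x. \<bar>exp (- t * x - V x)\<bar> \<le> K * exp (- t * \<bar>x\<bar>)"
proof -
  obtain c C where "\<And>x. V x \<ge> 0" "\<And>x. x \<le> - C \<Longrightarrow> V x \<ge> c * x\<^sup>2" "c > 0" "C > 0"
    using assms(1) unfolding OConnell_Yor_type_def by blast
  with assms(2) show ?thesis
    using exp_potential_le that by (metis abs_exp_cancel less_imp_le)
qed

lemma OConnell_Yor_type_concave_score_density:
  assumes OY: "OConnell_Yor_type V" and "\<theta> > 0"
  shows "concave_score_density (\<lambda>x. exp (- \<theta> * x - V x)) (\<lambda>x. \<theta> + nderiv 1 V x) (nderiv 2 V)"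
proof -
  obtain K where K: "\<And>x. \<bar>exp (- \<theta> * x - V x)\<bar> \<le> K * exp (- \<theta> * \<bar>x\<bar>)"
    using OConnell_Yor_type_density_bound[OF assms] by blast
  note measurable = OConnell_Yor_type_measurable[OF OY, of \<theta>]
  have V2: "(nderiv 1 V has_real_derivative nderiv 2 V x) (at x)"
    and V3: "(nderiv 2 V has_real_derivative nderiv 3 V x) (at x)" for x
    using OConnell_Yor_type_nderiv[OF OY, of 1 x] OConnell_Yor_type_nderiv[OF OY, of 2 x]
    by (simp_all add: numeral_2_eq_2 numeral_3_eq_3)
  have second_nonneg: "nderiv 2 V x \<ge> 0" for x
    using OY unfolding OConnell_Yor_type_def
    by (intro convex_on_second_deriv_nonneg[OF _ OConnell_Yor_type_deriv[OF OY] V2]) blast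
  obtain c0 where c0: "c0 > 0" "\<And>x. c0 * nderiv 2 V x \<le> - nderiv 3 V x"
    using OY unfolding OConnell_Yor_type_def by blast
  have third_nonpos: "nderiv 3 V x \<le> 0" for x
  proof -
    have "0 \<le> c0 * nderiv 2 V x"
      using c0(1) second_nonneg[of x] by simp
    with c0(2)[of x] show ?thesis
      by linarith
  qed
  show ?thesis
  proof
    show "exp (- \<theta> * x - V x) > 0" for x
      by simp
    show "((\<lambda>x. exp (- \<theta> * x - V x)) has_real_derivative
        - (\<theta> + nderiv 1 V x) * exp (- \<theta> * x - V x)) (at x)" for x
      by (auto intro!: derivative_eq_intros OConnell_Yor_type_deriv[OF OY] simp: algebra_simps)
    show "((\<lambda>x. \<theta> + nderiv 1 V x) has_real_derivative nderiv 2 V x) (at x)" for x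
      using DERIV_add[OF DERIV_const V2] by simp
    show "nderiv 2 V x \<ge> 0" for x
      by (rule second_nonneg)
    show "nderiv 2 V y \<le> nderiv 2 V x" if "x \<le> y" for x y
      using V3 third_nonpos by (intro DERIV_nonpos_imp_nonincreasing[OF that]) blast
    show "integrable lborel (\<lambda>x. x ^ k * exp (- \<theta> * x - V x))" for k
      using measurable K \<open>\<theta> > 0\<close> by (rule integrable_power_mult_exp_decay)
    show "((\<lambda>x. x ^ k * exp (- \<theta> * x - V x)) \<longlongrightarrow> 0) at_top" for k
      using measurable K \<open>\<theta> > 0\<close> by (rule tendsto_power_mult_exp_decay_at_top)
    show "((\<lambda>x. x ^ k * exp (- \<theta> * x - V x)) \<longlongrightarrow> 0) at_bot" for k
      using measurable K \<open>\<theta> > 0\<close> by (rule tendsto_power_mult_exp_decay_at_bot)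
  qed
qed

lemma OConnell_Yor_type_laplace_moment_deriv:
  assumes OY: "OConnell_Yor_type V" and "s > 0"
  shows "((\<lambda>t. \<integral>x. x ^ k * exp (- t * x - V x) \<partial>lborel) has_real_derivative
      - (\<integral>x. x ^ Suc k * exp (- s * x - V x) \<partial>lborel)) (at s)"
proof -
  obtain K where K: "\<And>x. \<bar>exp (- s * x - V x)\<bar> \<le> K * exp (- s * \<bar>x\<bar>)"
    using OConnell_Yor_type_density_bound[OF assms] by blast
  have shift: "(\<integral>x. x ^ k * exp (- r * x) * exp (- s * x - V x) \<partial>lborel) =
      (\<integral>x. x ^ k * exp (- (r + s) * x - V x) \<partial>lborel)" for r
    by (simp add: mult.assoc mult_exp_exp algebra_simps)
  have "((\<lambda>r. \<integral>x. x ^ k * exp (- r * x) * exp (- s * x - V x) \<partial>lborel) has_real_derivative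
      - (\<integral>x. x ^ Suc k * exp (- s * x - V x) \<partial>lborel)) (at 0)"
    using OConnell_Yor_type_measurable[OF OY] K \<open>s > 0\<close> by (rule laplace_power_mult_exp_decay_has_real_derivative)
  then show ?thesis
    unfolding shift DERIV_shift[where x = 0 and z = s, simplified] .
qed

theorem lemmaD1:
  fixes V :: "real \<Rightarrow> real" and \<theta> :: real
  assumes "OConnell_Yor_type V" and "\<theta> > 0"
  shows "psi2 V \<theta> \<le> 0"
proof -
  define M where "M k s = (\<integral>x. x ^ k * exp (- s * x - V x) \<partial>lborel)" for k s
  interpret concave_score_density "\<lambda>x. exp (- \<theta> * x - V x)" "\<lambda>x. \<theta> + nderiv 1 V x" "nderiv 2 V"
    using assms by (rule OConnell_Yor_type_concave_score_density)
  have M_deriv: "(M k has_real_derivative - M (Suc k) s) (at s)" if "s > 0" for k s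
    unfolding M_def[abs_def] using assms(1) that by (rule OConnell_Yor_type_laplace_moment_deriv)
  have M_pos: "M 0 s > 0" if "s > 0" for s
    using concave_score_density.integrable_moment[OF OConnell_Yor_type_concave_score_density[OF assms(1) that], of 0]
    unfolding M_def by (simp add: integral_lborel_pos)
  have "psi2 V \<theta> = - (M 3 \<theta> / M 0 \<theta> - 3 * (M 1 \<theta> / M 0 \<theta>) * (M 2 \<theta> / M 0 \<theta>) + 2 * (M 1 \<theta> / M 0 \<theta>) ^ 3)"
    unfolding psi2_def Zpart_def
    using nderiv_3_ln_of_moments[of "{0<..}" \<theta> M] assms(2) M_deriv M_pos by (simp add: M_def)
  also have "\<dots> = - (central_moment 3 / moment 0)"
    unfolding M_def moment_def[symmetric] third_cumulant ..
  finally show ?thesis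
    using central_moment_3_nonneg moment_0_pos by simp
qed

end
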